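(* Let $N\ge1$ and consider linear subsystems $\Sigma_1,\dots,\Sigma_N$ and their interconnection $\Sigma$ as described in the context, with safe sets $X_i$, input sets $U_i$, $X=\prod_i X_i$, $U=\prod_i U_i$. For each $i\in[1;N]$ let $\rho_i\ge0$ and let $C_i^{\rho_i}:\mathbb{R}^{n_i}\rightrightarrows U_i$ be a $\rho_i$-inner safety controller for $\Sigma_i$ and safe set $X_i$. Define $C^{\rho}:\mathbb{R}^n\rightrightarrows U$ by $C^\rho(x)=\emptyset$ for $x\in\mathbb{R}^n\setminus X$ and, for $x=[x_1;\dots;x_N]\in X$, $$C^{\rho}(x)=\{u=[u_1;\dots;u_N]\in U\mid u_i\in C_i^{\rho_i}(x_i)\ \text{for all } i\in[1;N]\}.$$ Then $C^{\rho}$ is a $\rho$-inner safety controller for the interconnected system $\Sigma$, safe set $X$ and input set $U$, where $\rho=\|[\rho_1;\dots;\rho_N]\|$ (infinity norm).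
   Context: Subsystem $\Sigma_i$ is linear: $x_i(t+1)=A_ix_i(t)+B_iu_i(t)+D_iz_i(t)+w_i(t)$ with $A_i\in\mathbb{R}^{n_i\times n_i}$, $B_i\in\mathbb{R}^{n_i\times m_i}$, $D_i\in\mathbb{R}^{n_i\times p_i}$, $w_i(t)\in W_i\subseteq\mathbb{R}^{n_i}$ (compact disturbance set), and internal input $z_i=[z_{i1};\dots;z_{i(i-1)};z_{i(i+1)};\dots;z_{iN}]\in\mathbb{R}^{p_i}$, $z_{ij}\in\mathbb{R}^{p_{ij}}$; outputs are $h_{ij}(x_i)=H_{ij}x_i$ with $H_{ij}\in\mathbb{R}^{p_{ji}\times n_i}$ for $j\ne i$. The interconnected system $\Sigma$ has state $x=[x_1;\dots;x_N]\in\mathbb{R}^n$, input $u=[u_1;\dots;u_N]$, disturbance $w\in W=\prod_iW_i$, and transition $f(x,u,w)=[A_1x_1+B_1u_1+D_1z_1+w_1;\dots;A_Nx_N+B_Nu_N+D_Nz_N+w_N]$ with $z_{ij}=H_{ji}x_j$. $X_i\subseteq\mathbb{R}^{n_i}$, $U_i\subseteq\mathbb{R}^{m_i}$ are compact. For $i\ne j$ there are compact sets $Z_{ij}\subseteq\mathbb{R}^{p_{ij}}$ with $H_{ji}(X_j)\subseteq Z_{ij}$, and $Z_i=\prod_{j\ne i}Z_{ij}$; Minkowski sums of sets are denoted by $+$. A $\rho_i$-inner safety controller for $\Sigma_i$ and $X_i$ (in the paper, one obtained from an inner approximation of the maximal robust controlled invariant set with accuracy parameter $\rho_i$) is a set-valued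 map $C_i:\mathbb{R}^{n_i}\rightrightarrows U_i$ with (1) $C_i(x_i)\subseteq U_i$ for all $x_i$; (2) $\mathrm{dom}(C_i)=\{x_i\mid C_i(x_i)\ne\emptyset\}\subseteq X_i$; (3) for all $x_i\in\mathrm{dom}(C_i)$ and $u_i\in C_i(x_i)$: $A_ix_i+B_iu_i+D_iZ_i+W_i\subseteq\mathrm{dom}(C_i)$. A $\rho$-inner safety controller for $\Sigma$, $X$ and $U$ is a set-valued map $C:\mathbb{R}^n\rightrightarrows U$ with (1) $C(x)\subseteq U$; (2) $\mathrm{dom}(C)\subseteq X$; (3) for all $x\in\mathrm{dom}(C)$, $u\in C(x)$, $w\in W$: $f(x,u,w)\in\mathrm{dom}(C)$. *)

theory Defs
  imports "HOL-Analysis.Analysis"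
begin

text \<open>Vectors of R^k are represented as functions nat => real that vanish from index k on;
  a k x l matrix is a function nat => nat => real of which only entries (r,c) with r<k, c<l matter.\<close>

definition vecs :: "nat \<Rightarrow> (nat \<Rightarrow> real) set" where
  "vecs k = {v. \<forall>j\<ge>k. v j = 0}"

definition mv :: "nat \<Rightarrow> nat \<Rightarrow> (nat \<Rightarrow> nat \<Rightarrow> real) \<Rightarrow> (nat \<Rightarrow> real) \<Rightarrow> (nat \<Rightarrow> real)" where
  "mv r c M v = (\<lambda>i. if i < r then (\<Sum>j<c. M i j * v j) else 0)"

definition prodset :: "nat \<Rightarrow> (nat \<Rightarrow> (nat \<Rightarrow> real) set) \<Rightarrow> (nat \<Rightarrow> nat \<Rightarrow> real) set" where
  "prodset N S = {x. (\<forall>i\<in>{1..N}. x i \<in> S i) \<and> (\<forall>i. i \<notin> {1..N} \<longrightarrow> x i = (\<lambda>_. 0))}"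

text \<open>Local transition of subsystem i:
  A_i x_i + B_i u_i + D_i z_i + w_i, where D_i z_i = sum over j ~= i of D_ij z_ij
  (D_ij the column block of D_i acting on z_ij, of size n_i x p_ij).\<close>
definition sub_step ::
  "nat \<Rightarrow> (nat \<Rightarrow> nat) \<Rightarrow> (nat \<Rightarrow> nat) \<Rightarrow> (nat \<Rightarrow> nat \<Rightarrow> nat)
   \<Rightarrow> (nat \<Rightarrow> nat \<Rightarrow> nat \<Rightarrow> real) \<Rightarrow> (nat \<Rightarrow> nat \<Rightarrow> nat \<Rightarrow> real)
   \<Rightarrow> (nat \<Rightarrow> nat \<Rightarrow> nat \<Rightarrow> nat \<Rightarrow> real)
   \<Rightarrow> nat \<Rightarrow> (nat \<Rightarrow> real) \<Rightarrow> (nat \<Rightarrow> real) \<Rightarrow> (nat \<Rightarrow> nat \<Rightarrow> real) \<Rightarrow> (nat \<Rightarrow> real)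
   \<Rightarrow> (nat \<Rightarrow> real)" where
  "sub_step N n m p A B D i xi ui z wi =
     (\<lambda>r. mv (n i) (n i) (A i) xi r + mv (n i) (m i) (B i) ui r
          + (\<Sum>j\<in>{1..N} - {i}. mv (n i) (p i j) (D i j) (z j) r) + wi r)"

text \<open>rho_i-inner safety controller for subsystem Sigma_i and safe set X_i (conditions (1)-(3)).
  The accuracy parameter rho is only a label: the defining conditions do not involve it.\<close>
definition sub_inner_ctrl ::
  "nat \<Rightarrow> (nat \<Rightarrow> nat) \<Rightarrow> (nat \<Rightarrow> nat) \<Rightarrow> (nat \<Rightarrow> nat \<Rightarrow> nat)
   \<Rightarrow> (nat \<Rightarrow> nat \<Rightarrow> nat \<Rightarrow> real) \<Rightarrow> (nat \<Rightarrow> nat \<Rightarrow> nat \<Rightarrow> real)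
   \<Rightarrow> (nat \<Rightarrow> nat \<Rightarrow> nat \<Rightarrow> nat \<Rightarrow> real)
   \<Rightarrow> (nat \<Rightarrow> nat \<Rightarrow> (nat \<Rightarrow> real) set) \<Rightarrow> (nat \<Rightarrow> (nat \<Rightarrow> real) set)
   \<Rightarrow> (nat \<Rightarrow> (nat \<Rightarrow> real) set) \<Rightarrow> (nat \<Rightarrow> (nat \<Rightarrow> real) set)
   \<Rightarrow> nat \<Rightarrow> real \<Rightarrow> ((nat \<Rightarrow> real) \<Rightarrow> (nat \<Rightarrow> real) set) \<Rightarrow> bool" where
  "sub_inner_ctrl N n m p A B D Z W U X i rho Ci \<longleftrightarrow>
     (\<forall>xi. Ci xi \<subseteq> U i) \<and>
     {xi. Ci xi \<noteq> {}} \<subseteq> X i \<and>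
     (\<forall>xi \<in> {xi. Ci xi \<noteq> {}}. \<forall>ui \<in> Ci xi. \<forall>z. (\<forall>j\<in>{1..N} - {i}. z j \<in> Z i j) \<longrightarrow>
        (\<forall>wi\<in>W i. sub_step N n m p A B D i xi ui z wi \<in> {xi. Ci xi \<noteq> {}}))"

definition inter_step ::
  "nat \<Rightarrow> (nat \<Rightarrow> nat) \<Rightarrow> (nat \<Rightarrow> nat) \<Rightarrow> (nat \<Rightarrow> nat \<Rightarrow> nat)
   \<Rightarrow> (nat \<Rightarrow> nat \<Rightarrow> nat \<Rightarrow> real) \<Rightarrow> (nat \<Rightarrow> nat \<Rightarrow> nat \<Rightarrow> real)
   \<Rightarrow> (nat \<Rightarrow> nat \<Rightarrow> nat \<Rightarrow> nat \<Rightarrow> real) \<Rightarrow> (nat \<Rightarrow> nat \<Rightarrow> nat \<Rightarrow> nat \<Rightarrow> real)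
   \<Rightarrow> (nat \<Rightarrow> nat \<Rightarrow> real) \<Rightarrow> (nat \<Rightarrow> nat \<Rightarrow> real) \<Rightarrow> (nat \<Rightarrow> nat \<Rightarrow> real)
   \<Rightarrow> (nat \<Rightarrow> nat \<Rightarrow> real)" where
  "inter_step N n m p A B D H x u w =
     (\<lambda>i. if i \<in> {1..N}
          then sub_step N n m p A B D i (x i) (u i) (\<lambda>j. mv (p i j) (n j) (H j i) (x j)) (w i)
          else (\<lambda>_. 0))"

text \<open>rho-inner safety controller for a system with transition f, safe set X, input set U,
  disturbance set W (conditions (1)-(3)); rho is again only a label.\<close>
definition inner_ctrl ::
  "('x \<Rightarrow> 'u \<Rightarrow> 'w \<Rightarrow> 'x) \<Rightarrow> 'x set \<Rightarrow> 'u set \<Rightarrow> 'w set \<Rightarrow> real \<Rightarrow> ('x \<Rightarrow> 'u set) \<Rightarrow> bool" where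
  "inner_ctrl f X U W rho C \<longleftrightarrow>
     (\<forall>x. C x \<subseteq> U) \<and>
     {x. C x \<noteq> {}} \<subseteq> X \<and>
     (\<forall>x \<in> {x. C x \<noteq> {}}. \<forall>u \<in> C x. \<forall>w \<in> W. f x u w \<in> {x. C x \<noteq> {}})"

end

theory Submission
  imports Defs
begin

text \<open>Each local controller is robust against every internal input in \<open>Z\<^sub>i\<close>, and as long as
  \<open>x\<^sub>j \<in> X\<^sub>j\<close> the actual internal input \<open>z\<^sub>i\<^sub>j = H\<^sub>j\<^sub>i x\<^sub>j\<close> lies in \<open>Z\<^sub>i\<^sub>j\<close>. Hence one step of the
  interconnection keeps every component in the domain of its local controller, and the domain of
  the product controller is exactly the set of states all of whose components lie in these
  domains.\<close>

lemma sub_inner_ctrl_subset_inputs: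
  "sub_inner_ctrl N n m p A B D Z W U X i r Ci \<Longrightarrow> Ci xi \<subseteq> U i"
  unfolding sub_inner_ctrl_def by blast

lemma sub_inner_ctrl_dom_subset:
  "sub_inner_ctrl N n m p A B D Z W U X i r Ci \<Longrightarrow> Ci xi \<noteq> {} \<Longrightarrow> xi \<in> X i"
  unfolding sub_inner_ctrl_def by blast

lemma sub_inner_ctrl_step_in_dom:
  assumes "sub_inner_ctrl N n m p A B D Z W U X i r Ci"
    and "ui \<in> Ci xi" and "\<forall>j\<in>{1..N} - {i}. z j \<in> Z i j" and "wi \<in> W i"
  shows "Ci (sub_step N n m p A B D i xi ui z wi) \<noteq> {}"
  using assms unfolding sub_inner_ctrl_def by blast

lemma product_selections_nonempty_iff:
  assumes "\<And>i. i \<in> {1..N} \<Longrightarrow> Cl i (x i) \<subseteq> U i"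
  shows "{u \<in> prodset N U. \<forall>i\<in>{1..N}. u i \<in> Cl i (x i)} \<noteq> {}
           \<longleftrightarrow> (\<forall>i\<in>{1..N}. Cl i (x i) \<noteq> {})"
proof
  assume "\<forall>i\<in>{1..N}. Cl i (x i) \<noteq> {}"
  then have some_in: "(SOME v. v \<in> Cl i (x i)) \<in> Cl i (x i)" if "i \<in> {1..N}" for i
    using that by (simp add: some_in_eq)
  define u where "u i = (if i \<in> {1..N} then SOME v. v \<in> Cl i (x i) else (\<lambda>_. 0))" for i
  have "u \<in> prodset N U"
    unfolding prodset_def u_def using some_in assms by fastforce
  moreover have "\<forall>i\<in>{1..N}. u i \<in> Cl i (x i)"
    unfolding u_def using some_in by simp
  ultimately show "{u \<in> prodset N U. \<forall>i\<in>{1..N}. u i \<in> Cl i (x i)} \<noteq> {}"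
    by blast
qed blast

lemma inter_step_outside:
  "i \<notin> {1..N} \<Longrightarrow> inter_step N n m p A B D H x u w i = (\<lambda>_. 0)"
  unfolding inter_step_def by auto

lemma inter_step_in_local_dom:
  assumes Ci: "sub_inner_ctrl N n m p A B D Z W U X i r Ci"
    and HZ: "\<And>j. j \<in> {1..N} \<Longrightarrow> i \<noteq> j \<Longrightarrow> mv (p i j) (n j) (H j i) ` X j \<subseteq> Z i j"
    and i: "i \<in> {1..N}" and x: "x \<in> prodset N X" and u: "u i \<in> Ci (x i)"
    and w: "w \<in> prodset N W"
  shows "Ci (inter_step N n m p A B D H x u w i) \<noteq> {}"
proof -
  have "\<forall>j\<in>{1..N} - {i}. mv (p i j) (n j) (H j i) (x j) \<in> Z i j"
    using x HZ unfolding prodset_def by blast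
  moreover have "w i \<in> W i"
    using w i unfolding prodset_def by blast
  ultimately show ?thesis
    using sub_inner_ctrl_step_in_dom[OF Ci u] i unfolding inter_step_def by simp
qed

theorem proposition1:
  fixes N :: nat
    and n m :: "nat \<Rightarrow> nat" and p :: "nat \<Rightarrow> nat \<Rightarrow> nat"
    and A B :: "nat \<Rightarrow> nat \<Rightarrow> nat \<Rightarrow> real"
    and D H :: "nat \<Rightarrow> nat \<Rightarrow> nat \<Rightarrow> nat \<Rightarrow> real"
    and X U W :: "nat \<Rightarrow> (nat \<Rightarrow> real) set"
    and Z :: "nat \<Rightarrow> nat \<Rightarrow> (nat \<Rightarrow> real) set"
    and rho :: "nat \<Rightarrow> real"
    and Cl :: "nat \<Rightarrow> (nat \<Rightarrow> real) \<Rightarrow> (nat \<Rightarrow> real) set"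
    and C :: "(nat \<Rightarrow> nat \<Rightarrow> real) \<Rightarrow> (nat \<Rightarrow> nat \<Rightarrow> real) set"
  assumes N: "N \<ge> 1"
    and X: "\<And>i. i \<in> {1..N} \<Longrightarrow> X i \<subseteq> vecs (n i) \<and> compact (X i)"
    and U: "\<And>i. i \<in> {1..N} \<Longrightarrow> U i \<subseteq> vecs (m i) \<and> compact (U i)"
    and W: "\<And>i. i \<in> {1..N} \<Longrightarrow> W i \<subseteq> vecs (n i) \<and> compact (W i)"
    and Z: "\<And>i j. i \<in> {1..N} \<Longrightarrow> j \<in> {1..N} \<Longrightarrow> i \<noteq> j \<Longrightarrow>
              Z i j \<subseteq> vecs (p i j) \<and> compact (Z i j)"
    and HZ: "\<And>i j. i \<in> {1..N} \<Longrightarrow> j \<in> {1..N} \<Longrightarrow> i \<noteq> j \<Longrightarrow>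
              mv (p i j) (n j) (H j i) ` X j \<subseteq> Z i j"
    and rho: "\<And>i. i \<in> {1..N} \<Longrightarrow> rho i \<ge> 0"
    and Cl: "\<And>i. i \<in> {1..N} \<Longrightarrow> sub_inner_ctrl N n m p A B D Z W U X i (rho i) (Cl i)"
    and C_def: "\<And>x. C x = (if x \<in> prodset N X
                           then {u \<in> prodset N U. \<forall>i\<in>{1..N}. u i \<in> Cl i (x i)}
                           else {})"
  shows "inner_ctrl (inter_step N n m p A B D H) (prodset N X) (prodset N U) (prodset N W)
           (Max (rho ` {1..N})) C"
proof -
  let ?f = "inter_step N n m p A B D H"
  have dom_C: "C x \<noteq> {} \<longleftrightarrow> x \<in> prodset N X \<and> (\<forall>i\<in>{1..N}. Cl i (x i) \<noteq> {})" for x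
    using C_def product_selections_nonempty_iff[of N Cl x U] sub_inner_ctrl_subset_inputs[OF Cl]
    by simp
  have "C (?f x u w) \<noteq> {}" if u: "u \<in> C x" and w: "w \<in> prodset N W" for x u w
  proof -
    have x: "x \<in> prodset N X" and u_local: "\<forall>i\<in>{1..N}. u i \<in> Cl i (x i)"
      using u C_def by (auto split: if_splits)
    have local_dom: "\<forall>i\<in>{1..N}. Cl i (?f x u w i) \<noteq> {}"
    proof
      fix i assume i: "i \<in> {1..N}"
      show "Cl i (?f x u w i) \<noteq> {}"
        using inter_step_in_local_dom[OF Cl[OF i] _ i x _ w] HZ[OF i] u_local i by blast
    qed
    then have "?f x u w \<in> prodset N X"
      using sub_inner_ctrl_dom_subset[OF Cl] inter_step_outside unfolding prodset_def by blast
    with local_dom show ?thesis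
      using dom_C by blast
  qed
  then show ?thesis
    unfolding inner_ctrl_def using C_def dom_C by auto
qed

end
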